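(* Let $\mathcal F$ be a class of functions $\mathcal X\to[0,1]$, let $r^*=r^*(\mathcal G)$ be a localization radius of $\mathcal G=\{(f-g)^2:f,g\in\mathcal F\}$, let $S'\in(\mathcal X\times[0,1])^n$ be arbitrary, let $c\in\mathcal F$, and for $\bar\gamma>0$ let $\mathcal F_c(\bar\gamma)=\{f\in\mathcal F:d_{S'}(f,c)\le\bar\gamma\}$. Then for every $\bar\gamma\ge\sqrt{r^*}$, $$\hat{\mathfrak R}_n(\ell\circ\mathcal F_c(\bar\gamma),S')\le\bar\gamma\sqrt{r^*}+\frac{24}{\sqrt n}\int_0^{\bar\gamma}\sqrt{\log\mathcal N_2(\mathcal F,\rho,S')}\,d\rho.$$
   Context: $\mathcal Z=\mathcal X\times[0,1]$; for $S=\{(x_i,y_i)\}_{i\le n}$, $d_S(f,g)=(\frac1n\sum_i(f(x_i)-g(x_i))^2)^{1/2}$ and $\mathcal N_2(\mathcal F,\rho,S)$ is the minimal size of a $\rho$-cover of $\mathcal F$ in $d_S$. $\ell\circ\mathcal H=\{(x,y)\mapsto(f(x)-y)^2:f\in\mathcal H\}$. For a class $\mathcal G$ of real functions on $\mathcal Z$ and $S=\{z_1,\dots,z_n\}\in\mathcal Z^n$, $\hat{\mathfrak R}_n(\mathcal G,S)=\mathbb E_\sigma\sup_{g\in\mathcal G}\frac1n\sum_{i=1}^n\sigma_ig(z_i)$ with $\sigma_i$ i.i.d. uniform on $\{-1,1\}$; $\mathcal G[r,S]=\{g\in\mathcal G:\frac1n\sum_{i=1}^ng(z_i)\le r\}$.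 A localization radius $r^*(\mathcal G)$ is any number that is at least the largest solution of $\phi_n(r)=r$, for some function $\phi_n:[0,\infty)\to[0,\infty)$ that is nondecreasing, such that $\phi_n(r)/\sqrt r$ is nonincreasing on $(0,\infty)$, and such that $\sup_{S\in\mathcal Z^n}\hat{\mathfrak R}_n(\mathcal G[r,S],S)\le\phi_n(r)$ for all $r>0$. *)

theory Defs
  imports "HOL-Analysis.Analysis" "HOL-Library.FuncSet"
begin

definition sample_in_Z :: "nat \<Rightarrow> ('x \<times> real) list \<Rightarrow> bool" where
  "sample_in_Z n S \<longleftrightarrow> length S = n \<and> (\<forall>z\<in>set S. snd z \<in> {0..1})"

definition emp_dist :: "('x \<times> real) list \<Rightarrow> ('x \<Rightarrow> real) \<Rightarrow> ('x \<Rightarrow> real) \<Rightarrow> real" where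
  "emp_dist S f g = sqrt ((\<Sum>i<length S. (f (fst (S!i)) - g (fst (S!i)))\<^sup>2) / length S)"

definition is_cover :: "('x \<Rightarrow> real) set \<Rightarrow> real \<Rightarrow> ('x \<times> real) list \<Rightarrow> ('x \<Rightarrow> real) set \<Rightarrow> bool" where
  "is_cover F \<rho> S C \<longleftrightarrow> (\<forall>f\<in>F. \<exists>c\<in>C. emp_dist S f c \<le> \<rho>)"

definition covering_number :: "('x \<Rightarrow> real) set \<Rightarrow> real \<Rightarrow> ('x \<times> real) list \<Rightarrow> nat" where
  "covering_number F \<rho> S = (LEAST k. \<exists>C. finite C \<and> card C = k \<and> is_cover F \<rho> S C)"

definition loss_class :: "('x \<Rightarrow> real) set \<Rightarrow> ('x \<times> real \<Rightarrow> real) set" where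
  "loss_class H = (\<lambda>f. \<lambda>(x,y). (f x - y)\<^sup>2) ` H"

definition emp_rademacher :: "('z \<Rightarrow> real) set \<Rightarrow> 'z list \<Rightarrow> real" where
  "emp_rademacher G S =
     (\<Sum>\<sigma>\<in>({..<length S} \<rightarrow>\<^sub>E {-1::real, 1}).
        (SUP g\<in>G. (\<Sum>i<length S. \<sigma> i * g (S!i)) / length S)) / 2 ^ length S"

definition loc_class :: "('z \<Rightarrow> real) set \<Rightarrow> real \<Rightarrow> 'z list \<Rightarrow> ('z \<Rightarrow> real) set" where
  "loc_class G r S = {g\<in>G. (\<Sum>i<length S. g (S!i)) / length S \<le> r}"

definition loc_radius :: "nat \<Rightarrow> ('x \<times> real \<Rightarrow> real) set \<Rightarrow> real \<Rightarrow> bool" where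
  "loc_radius n G rs \<longleftrightarrow> (\<exists>\<phi>::real \<Rightarrow> real.
      (\<forall>r\<ge>0. \<phi> r \<ge> 0) \<and>
      mono_on {0..} \<phi> \<and>
      (\<forall>r1 r2. 0 < r1 \<longrightarrow> r1 \<le> r2 \<longrightarrow> \<phi> r2 / sqrt r2 \<le> \<phi> r1 / sqrt r1) \<and>
      (\<forall>r>0. \<forall>S. sample_in_Z n S \<longrightarrow> emp_rademacher (loc_class G r S) S \<le> \<phi> r) \<and>
      (\<exists>r0\<ge>0. \<phi> r0 = r0 \<and> (\<forall>r\<ge>0. \<phi> r = r \<longrightarrow> r \<le> r0) \<and> r0 \<le> rs))"

end

theory Submission
  imports Defs "HOL-Probability.Hoeffding"
begin

text \<open>Dudley's chaining argument. Take minimal empirical covers of F at the scales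
  \<gamma>/2^j, with centres clipped to [0,1]; since the square loss is 2-Lipschitz on [0,1], their loss
  vectors approximate those of the ball F_c(\<gamma>) at scale 2\<gamma>/2^j. Telescoping along these
  approximations and applying Massart's finite class lemma at every level bounds the empirical
  Rademacher complexity by 2\<gamma>/2^K plus 24/sqrt n times a lower Riemann sum of
  sqrt (log N_2(F, \<rho>, S')) over the dyadic partition of (0, \<gamma>]. Letting K tend to infinity
  gives the entropy integral.\<close>

lemma cosh_le_exp_square_half: "cosh (x::real) \<le> exp (x\<^sup>2 / 2)"
proof -
  have "cosh \<bar>x\<bar> \<le> exp (\<bar>x\<bar>\<^sup>2 / 2)"
  proof -
    have "1 + (1/2) * (exp (2 * \<bar>x\<bar>) - 1) = exp \<bar>x\<bar> * cosh \<bar>x\<bar>"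
      by (simp add: cosh_def field_simps exp_minus flip: exp_add)
    moreover have "- (2 * \<bar>x\<bar>) * (1/2) + ln (1 + (1/2) * (exp (2 * \<bar>x\<bar>) - 1)) \<le> (2 * \<bar>x\<bar>)\<^sup>2 / 8"
      by (rule Hoeffdings_lemma_aux) auto
    ultimately have "ln (cosh \<bar>x\<bar>) \<le> \<bar>x\<bar>\<^sup>2 / 2"
      by (simp add: ln_mult power2_eq_square)
    thus ?thesis by (metis cosh_real_pos exp_le_cancel_iff exp_ln)
  qed
  thus ?thesis by (cases "x \<ge> 0") simp_all
qed

definition rademacher_mean :: "nat \<Rightarrow> ((nat \<Rightarrow> real) \<Rightarrow> real) \<Rightarrow> real" where
  "rademacher_mean n h = (\<Sum>\<sigma>\<in>{..<n} \<rightarrow>\<^sub>E {-1, 1}. h \<sigma>) / 2 ^ n"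

lemma card_sign_vectors: "card ({..<n} \<rightarrow>\<^sub>E {-1::real, 1}) = 2 ^ n"
  by (simp add: card_PiE numeral_2_eq_2)

lemma rademacher_mean_mono:
  assumes "\<And>\<sigma>. \<sigma> \<in> {..<n} \<rightarrow>\<^sub>E {-1, 1} \<Longrightarrow> h \<sigma> \<le> k \<sigma>"
  shows "rademacher_mean n h \<le> rademacher_mean n k"
  unfolding rademacher_mean_def using assms by (intro divide_right_mono sum_mono) auto

lemma rademacher_mean_add:
  "rademacher_mean n (\<lambda>\<sigma>. h \<sigma> + k \<sigma>) = rademacher_mean n h + rademacher_mean n k"
  by (simp add: rademacher_mean_def sum.distrib add_divide_distrib)

lemma rademacher_mean_sum:
  "rademacher_mean n (\<lambda>\<sigma>. \<Sum>j\<in>J. h j \<sigma>) = (\<Sum>j\<in>J. rademacher_mean n (h j))"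
  unfolding rademacher_mean_def by (subst sum.swap) (simp add: sum_divide_distrib)

lemma rademacher_mean_const: "rademacher_mean n (\<lambda>_. a) = a"
  by (simp add: rademacher_mean_def card_sign_vectors)

lemma rademacher_mean_cmult: "rademacher_mean n (\<lambda>\<sigma>. a * h \<sigma>) = a * rademacher_mean n h"
  by (simp add: rademacher_mean_def sum_distrib_left)

lemma rademacher_mean_divide: "rademacher_mean n (\<lambda>\<sigma>. h \<sigma> / a) = rademacher_mean n h / a"
  by (simp add: rademacher_mean_def sum_divide_distrib mult.commute)

lemma rademacher_mean_sum_product:
  "rademacher_mean n (\<lambda>\<sigma>. \<Prod>i<n. g i (\<sigma> i)) = (\<Prod>i<n. (g i (-1) + g i 1) / 2)"
proof -
  have "(\<Sum>\<sigma>\<in>{..<n} \<rightarrow>\<^sub>E {-1, 1}. \<Prod>i<n. g i (\<sigma> i)) = (\<Prod>i<n. \<Sum>s\<in>{-1, 1}. g i s)"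
    by (rule prod_sum_PiE [symmetric]) auto
  thus ?thesis by (simp add: rademacher_mean_def prod_dividef)
qed

lemma rademacher_mean_coordinate:
  assumes "i < n"
  shows "rademacher_mean n (\<lambda>\<sigma>. \<sigma> i * a) = 0"
proof -
  have "rademacher_mean n (\<lambda>\<sigma>. \<sigma> i * a)
      = rademacher_mean n (\<lambda>\<sigma>. \<Prod>k<n. if k = i then \<sigma> k * a else 1)"
    using assms by (simp add: prod.If_cases)
  also have "\<dots> = (\<Prod>k<n. ((if k = i then -1 * a else 1) + (if k = i then 1 * a else 1)) / 2)"
    by (rule rademacher_mean_sum_product)
  also have "\<dots> = 0"
    using assms by (intro prod_zero) auto
  finally show ?thesis .
qed

lemma rademacher_mean_exp_linear_le:
  "rademacher_mean n (\<lambda>\<sigma>. exp (t * (\<Sum>i<n. \<sigma> i * l i))) \<le> exp (t\<^sup>2 * (\<Sum>i<n. (l i)\<^sup>2) / 2)"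
proof -
  have "rademacher_mean n (\<lambda>\<sigma>. exp (t * (\<Sum>i<n. \<sigma> i * l i)))
      = rademacher_mean n (\<lambda>\<sigma>. \<Prod>i<n. exp (\<sigma> i * (t * l i)))"
    by (simp add: sum_distrib_left exp_sum mult_ac)
  also have "\<dots> = (\<Prod>i<n. cosh (t * l i))"
    by (subst rademacher_mean_sum_product) (simp add: cosh_def scaleR_conv_of_real add.commute field_simps)
  also have "\<dots> \<le> (\<Prod>i<n. exp ((t * l i)\<^sup>2 / 2))"
    by (intro prod_mono) (simp add: cosh_le_exp_square_half)
  also have "\<dots> = exp (t\<^sup>2 * (\<Sum>i<n. (l i)\<^sup>2) / 2)"
    by (simp add: exp_sum [symmetric] sum_distrib_left sum_divide_distrib power_mult_distrib)
  finally show ?thesis .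
qed

lemma exp_rademacher_mean_le: "exp (rademacher_mean n h) \<le> rademacher_mean n (\<lambda>\<sigma>. exp (h \<sigma>))"
proof -
  let ?P = "{..<n} \<rightarrow>\<^sub>E {-1::real, 1}"
  have "exp (\<Sum>\<sigma>\<in>?P. (1 / 2 ^ n) *\<^sub>R h \<sigma>) \<le> (\<Sum>\<sigma>\<in>?P. (1 / 2 ^ n) * exp (h \<sigma>))"
  proof (rule convex_on_sum [where C = UNIV])
    show "?P \<noteq> {}" using card_sign_vectors [of n] by auto
  qed (auto intro: finite_PiE simp: exp_convex card_sign_vectors)
  thus ?thesis
    by (simp add: rademacher_mean_def sum_divide_distrib [symmetric])
qed

lemma le_two_sqrt_mult_if_le_div_add_mult:
  fixes x a b :: real
  assumes "a \<ge> 0" "b \<ge> 0" and le: "\<And>t. t > 0 \<Longrightarrow> x \<le> a / t + t * b"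
  shows "x \<le> 2 * sqrt (a * b)"
proof (cases "a > 0 \<and> b > 0")
  case True
  have "x \<le> a / sqrt (a / b) + sqrt (a / b) * b"
    using True by (intro le) simp
  also have "\<dots> = 2 * sqrt (a * b)"
    using True by (simp add: real_sqrt_divide real_sqrt_mult field_simps)
  finally show ?thesis .
next
  case False
  have "x \<le> 0 + e" if "e > 0" for e
  proof (cases "a = 0")
    case True
    have "x \<le> e / (b + 1) * b"
      using le [of "e / (b + 1)"] True \<open>e > 0\<close> \<open>b \<ge> 0\<close> by simp
    also have "\<dots> \<le> e"
      using \<open>e > 0\<close> \<open>b \<ge> 0\<close> by (simp add: field_simps)
    finally show ?thesis by simp
  next
    case False
    hence "b = 0" using \<open>\<not> (a > 0 \<and> b > 0)\<close> assms by auto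
    have "x \<le> a / ((a + 1) / e)"
      using le [of "(a + 1) / e"] \<open>b = 0\<close> \<open>e > 0\<close> \<open>a \<ge> 0\<close> by simp
    also have "\<dots> \<le> e"
      using \<open>e > 0\<close> \<open>a \<ge> 0\<close> by (simp add: field_simps)
    finally show ?thesis by simp
  qed
  hence "x \<le> 0" by (rule field_le_epsilon)
  moreover have "0 \<le> 2 * sqrt (a * b)" using assms by simp
  ultimately show ?thesis by linarith
qed

lemma massart_finite_class:
  fixes L :: "(nat \<Rightarrow> real) set" and m B :: real
  assumes L: "finite L" "L \<noteq> {}" "card L \<le> m" and "B \<ge> 0"
    and norm: "\<And>l. l \<in> L \<Longrightarrow> (\<Sum>i<n. (l i)\<^sup>2) \<le> B\<^sup>2"
  shows "rademacher_mean n (\<lambda>\<sigma>. Max ((\<lambda>l. \<Sum>i<n. \<sigma> i * l i) ` L)) \<le> B * sqrt (2 * ln m)"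
proof -
  let ?Z = "\<lambda>\<sigma> l. \<Sum>i<n. \<sigma> i * l i"
  let ?R = "rademacher_mean n (\<lambda>\<sigma>. Max (?Z \<sigma> ` L))"
  have "1 \<le> card L"
    using L by (simp add: Suc_le_eq card_gt_0_iff)
  hence m: "m \<ge> 1"
    using L(3) by linarith
  have bound: "?R \<le> ln m / t + t * (B\<^sup>2 / 2)" if "t > 0" for t
  proof -
    have "exp (t * ?R) \<le> rademacher_mean n (\<lambda>\<sigma>. exp (t * Max (?Z \<sigma> ` L)))"
      using exp_rademacher_mean_le [of n "\<lambda>\<sigma>. t * Max (?Z \<sigma> ` L)"]
      by (simp add: rademacher_mean_cmult)
    also have "\<dots> \<le> rademacher_mean n (\<lambda>\<sigma>. \<Sum>l\<in>L. exp (t * ?Z \<sigma> l))"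
    proof (rule rademacher_mean_mono)
      fix \<sigma> :: "nat \<Rightarrow> real"
      have "Max (?Z \<sigma> ` L) \<in> ?Z \<sigma> ` L"
        using L by (intro Max_in) auto
      then obtain l where "l \<in> L" "Max (?Z \<sigma> ` L) = ?Z \<sigma> l"
        by auto
      thus "exp (t * Max (?Z \<sigma> ` L)) \<le> (\<Sum>l\<in>L. exp (t * ?Z \<sigma> l))"
        using L by (auto intro: member_le_sum)
    qed
    also have "\<dots> = (\<Sum>l\<in>L. rademacher_mean n (\<lambda>\<sigma>. exp (t * ?Z \<sigma> l)))"
      by (rule rademacher_mean_sum)
    also have "\<dots> \<le> (\<Sum>l\<in>L. exp (t\<^sup>2 * B\<^sup>2 / 2))"
    proof (rule sum_mono)
      fix l assume "l \<in> L"
      have "exp (t\<^sup>2 * (\<Sum>i<n. (l i)\<^sup>2) / 2) \<le> exp (t\<^sup>2 * B\<^sup>2 / 2)"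
        using norm [OF \<open>l \<in> L\<close>] by (simp add: mult_left_mono)
      thus "rademacher_mean n (\<lambda>\<sigma>. exp (t * ?Z \<sigma> l)) \<le> exp (t\<^sup>2 * B\<^sup>2 / 2)"
        using rademacher_mean_exp_linear_le [of n t l] by linarith
    qed
    also have "\<dots> \<le> m * exp (t\<^sup>2 * B\<^sup>2 / 2)"
      using L by simp
    also have "\<dots> = exp (ln m + t\<^sup>2 * B\<^sup>2 / 2)"
      using m by (simp add: exp_add)
    finally have "t * ?R \<le> ln m + t\<^sup>2 * B\<^sup>2 / 2"
      by simp
    thus ?thesis
      using \<open>t > 0\<close> by (simp add: field_simps power2_eq_square)
  qed
  have "?R \<le> 2 * sqrt (ln m * (B\<^sup>2 / 2))"
    using m by (intro le_two_sqrt_mult_if_le_div_add_mult bound) auto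
  also have "\<dots> = sqrt 4 * sqrt (ln m * (B\<^sup>2 / 2))"
    by simp
  also have "\<dots> = sqrt (4 * (ln m * (B\<^sup>2 / 2)))"
    by (rule real_sqrt_mult [symmetric])
  also have "\<dots> = sqrt (B\<^sup>2 * (2 * ln m))"
    by (rule arg_cong [where f = sqrt]) simp
  also have "\<dots> = B * sqrt (2 * ln m)"
    using \<open>B \<ge> 0\<close> by (simp add: real_sqrt_mult)
  finally show ?thesis .
qed

lemma sum_sign_mult_le:
  fixes \<sigma> w :: "nat \<Rightarrow> real" and e :: real
  assumes "\<And>i. i < n \<Longrightarrow> \<sigma> i \<in> {-1, 1}" "e \<ge> 0" "(\<Sum>i<n. (w i)\<^sup>2) \<le> n * e\<^sup>2"
  shows "(\<Sum>i<n. \<sigma> i * w i) \<le> n * e"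
proof -
  have "(\<Sum>i<n. \<sigma> i * w i)\<^sup>2 \<le> (\<Sum>i<n. (\<sigma> i)\<^sup>2) * (\<Sum>i<n. (w i)\<^sup>2)"
    by (rule Cauchy_Schwarz_ineq_sum)
  also have "(\<Sum>i<n. (\<sigma> i)\<^sup>2) = (\<Sum>i<n. 1)"
    using assms(1) by (intro sum.cong) (fastforce+)
  also have "(\<Sum>i<n. 1) * (\<Sum>i<n. (w i)\<^sup>2) \<le> (n * e)\<^sup>2"
    using mult_left_mono [OF assms(3), of n] by (simp add: power2_eq_square mult_ac)
  finally have "(\<Sum>i<n. \<sigma> i * w i)\<^sup>2 \<le> (n * e)\<^sup>2" .
  moreover have "0 \<le> n * e"
    using assms(2) by simp
  ultimately show ?thesis
    by (rule power2_le_imp_le)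
qed

lemma sum_square_diff_triangle:
  fixes p q v :: "nat \<Rightarrow> real"
  assumes "(\<Sum>i<n. (p i - v i)\<^sup>2) \<le> a\<^sup>2" "(\<Sum>i<n. (v i - q i)\<^sup>2) \<le> b\<^sup>2" "a \<ge> 0" "b \<ge> 0"
  shows "(\<Sum>i<n. (p i - q i)\<^sup>2) \<le> (a + b)\<^sup>2"
proof -
  have "L2_set (\<lambda>i. (p i - v i) + (v i - q i)) {..<n}
      \<le> L2_set (\<lambda>i. p i - v i) {..<n} + L2_set (\<lambda>i. v i - q i) {..<n}"
    by (rule L2_set_triangle_ineq)
  also have "\<dots> \<le> a + b"
    using assms by (intro add_mono) (auto simp: L2_set_def real_le_lsqrt)
  finally show ?thesis
    unfolding L2_set_def by (simp add: sqrt_le_D)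
qed

lemma sum_sign_telescope:
  fixes \<sigma> v :: "nat \<Rightarrow> real" and P :: "nat \<Rightarrow> nat \<Rightarrow> real"
  shows "(\<Sum>i<n. \<sigma> i * v i) = (\<Sum>i<n. \<sigma> i * P 0 i)
    + (\<Sum>j<K. \<Sum>i<n. \<sigma> i * (P (Suc j) i - P j i)) + (\<Sum>i<n. \<sigma> i * (v i - P K i))"
proof -
  have "\<sigma> i * v i = \<sigma> i * P 0 i + (\<Sum>j<K. \<sigma> i * (P (Suc j) i - P j i)) + \<sigma> i * (v i - P K i)" for i
  proof -
    have "\<sigma> i * v i = \<sigma> i * (P 0 i + (\<Sum>j<K. P (Suc j) i - P j i) + (v i - P K i))"
      using sum_lessThan_telescope [of "\<lambda>j. P j i" K] by simp
    thus ?thesis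
      by (simp only: distrib_left sum_distrib_left)
  qed
  thus ?thesis
    by (simp only: sum.distrib sum.swap [of _ "{..<K}"])
qed

lemma finite_diff_image:
  assumes "finite C" "finite C'" "\<And>a. a \<in> A \<Longrightarrow> p a \<in> C \<and> q a \<in> C'"
  shows "finite ((\<lambda>a i. p a i - q a i) ` A)" (is "finite ?L")
    and "card ((\<lambda>a i. p a i - q a i) ` A) \<le> card C * card C'"
proof -
  have sub: "?L \<subseteq> (\<lambda>(c, c') i. c i - c' i) ` (C \<times> C')"
    using assms(3) by fastforce
  thus "finite ?L"
    by (rule finite_subset) (simp add: assms(1,2))
  have "card ?L \<le> card ((\<lambda>(c, c') i. c i - c' i) ` (C \<times> C'))"
    using sub assms(1,2) by (intro card_mono) auto
  also have "\<dots> \<le> card (C \<times> C')"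
    using assms(1,2) by (intro card_image_le) auto
  finally show "card ?L \<le> card C * card C'"
    by (simp add: card_cartesian_product)
qed

lemma massart_increments:
  fixes p q v :: "'a \<Rightarrow> nat \<Rightarrow> real" and \<alpha> \<beta> :: real and k :: nat
  assumes "A \<noteq> {}" "finite C" "finite C'" "card C \<le> k" "card C' \<le> k" "\<alpha> \<ge> 0" "\<beta> \<ge> 0"
    and pq: "\<And>a. a \<in> A \<Longrightarrow> p a \<in> C \<and> q a \<in> C'"
    and p: "\<And>a. a \<in> A \<Longrightarrow> (\<Sum>i<n. (p a i - v a i)\<^sup>2) \<le> \<alpha>\<^sup>2"
    and q: "\<And>a. a \<in> A \<Longrightarrow> (\<Sum>i<n. (v a i - q a i)\<^sup>2) \<le> \<beta>\<^sup>2"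
  shows "rademacher_mean n (\<lambda>\<sigma>. Max ((\<lambda>l. \<Sum>i<n. \<sigma> i * l i) ` (\<lambda>a i. p a i - q a i) ` A))
    \<le> 2 * (\<alpha> + \<beta>) * sqrt (ln k)"
proof -
  have "card ((\<lambda>a i. p a i - q a i) ` A) \<le> card C * card C'"
    using finite_diff_image [of C C' A p q, OF assms(2,3) pq] by blast
  also have "\<dots> \<le> k ^ 2"
    using mult_le_mono [OF assms(4,5)] by (simp add: power2_eq_square)
  finally have card: "real (card ((\<lambda>a i. p a i - q a i) ` A)) \<le> real (k ^ 2)"
    by (simp only: of_nat_le_iff)
  have "rademacher_mean n (\<lambda>\<sigma>. Max ((\<lambda>l. \<Sum>i<n. \<sigma> i * l i) ` (\<lambda>a i. p a i - q a i) ` A))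
      \<le> (\<alpha> + \<beta>) * sqrt (2 * ln (real (k ^ 2)))"
  proof (rule massart_finite_class)
    fix l assume "l \<in> (\<lambda>a i. p a i - q a i) ` A"
    then obtain a where "a \<in> A" "l = (\<lambda>i. p a i - q a i)"
      by blast
    thus "(\<Sum>i<n. (l i)\<^sup>2) \<le> (\<alpha> + \<beta>)\<^sup>2"
      using sum_square_diff_triangle [OF p q assms(6,7)] by simp
  qed (use finite_diff_image [of C C' A p q, OF assms(2,3) pq] card assms(1,6,7) in auto)
  also have "\<dots> = 2 * (\<alpha> + \<beta>) * sqrt (ln k)"
  proof (cases "k = 0")
    case False
    hence "sqrt (2 * ln (real (k ^ 2))) = 2 * sqrt (ln k)"
      by (simp add: ln_realpow real_sqrt_mult)
    thus ?thesis by simp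
  qed simp
  finally show ?thesis .
qed

lemma rademacher_mean_SUP_le_decomposition:
  fixes v :: "'a \<Rightarrow> nat \<Rightarrow> real" and M :: "nat \<Rightarrow> (nat \<Rightarrow> real) \<Rightarrow> real"
  assumes "n > 0" "A \<noteq> {}"
    and decomp: "\<And>\<sigma> a. \<sigma> \<in> {..<n} \<rightarrow>\<^sub>E {-1, 1} \<Longrightarrow> a \<in> A \<Longrightarrow>
      (\<Sum>i<n. \<sigma> i * v a i) \<le> (\<Sum>i<n. \<sigma> i * t0 i) + (\<Sum>j<K. M j \<sigma>) + n * e"
    and M: "\<And>j. rademacher_mean n (M j) \<le> b j"
  shows "rademacher_mean n (\<lambda>\<sigma>. SUP a\<in>A. (\<Sum>i<n. \<sigma> i * v a i) / n) \<le> e + (\<Sum>j<K. b j) / n"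
proof -
  have "rademacher_mean n (\<lambda>\<sigma>. SUP a\<in>A. (\<Sum>i<n. \<sigma> i * v a i) / n)
      \<le> rademacher_mean n (\<lambda>\<sigma>. ((\<Sum>i<n. \<sigma> i * t0 i) + (\<Sum>j<K. M j \<sigma>) + n * e) / n)"
    using decomp \<open>A \<noteq> {}\<close> \<open>n > 0\<close>
    by (intro rademacher_mean_mono cSUP_least divide_right_mono) auto
  also have "\<dots> = e + (\<Sum>j<K. rademacher_mean n (M j)) / n"
    using \<open>n > 0\<close> by (simp add: rademacher_mean_divide rademacher_mean_add rademacher_mean_sum
        rademacher_mean_coordinate rademacher_mean_const field_simps)
  also have "\<dots> \<le> e + (\<Sum>j<K. b j) / n"
    using \<open>n > 0\<close> by (intro add_left_mono divide_right_mono sum_mono M) auto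
  finally show ?thesis .
qed

text \<open>Dudley chaining: each point of A is approximated at scale D/2^j by P j a \<in> C j, and the
  sign sum telescopes into the centred term at t0, one Massart bound per level, and a residual at
  scale D/2^K.\<close>
lemma rademacher_chaining:
  fixes A :: "'a set" and v :: "'a \<Rightarrow> nat \<Rightarrow> real" and C :: "nat \<Rightarrow> (nat \<Rightarrow> real) set"
    and m :: "nat \<Rightarrow> nat" and D :: real
  assumes "n > 0" "A \<noteq> {}" "D > 0" "C 0 = {t0}"
    and C: "\<And>j. finite (C j)" "\<And>j. card (C j) \<le> m j" "mono m"
    and cov: "\<And>j a. a \<in> A \<Longrightarrow> \<exists>c\<in>C j. (\<Sum>i<n. (v a i - c i)\<^sup>2) \<le> n * (D / 2 ^ j)\<^sup>2"
  shows "rademacher_mean n (\<lambda>\<sigma>. SUP a\<in>A. (\<Sum>i<n. \<sigma> i * v a i) / n)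
     \<le> D / 2 ^ K + 6 / sqrt n * (\<Sum>j<K. D / 2 ^ Suc j * sqrt (ln (m (Suc j))))"
proof -
  have "\<forall>j a. \<exists>c. a \<in> A \<longrightarrow> c \<in> C j \<and> (\<Sum>i<n. (v a i - c i)\<^sup>2) \<le> n * (D / 2 ^ j)\<^sup>2"
    using cov by blast
  then obtain P where P: "\<And>j a. a \<in> A \<Longrightarrow> P j a \<in> C j"
    and "\<And>j a. a \<in> A \<Longrightarrow> (\<Sum>i<n. (v a i - P j a i)\<^sup>2) \<le> n * (D / 2 ^ j)\<^sup>2"
    by metis
  moreover have "n * (D / 2 ^ j)\<^sup>2 = (sqrt n * (D / 2 ^ j))\<^sup>2" for j
    by (simp add: power_mult_distrib power_divide)
  ultimately have P_dist: "\<And>j a. a \<in> A \<Longrightarrow> (\<Sum>i<n. (v a i - P j a i)\<^sup>2) \<le> (sqrt n * (D / 2 ^ j))\<^sup>2"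
    by simp
  define M where "M j \<sigma> = Max ((\<lambda>l. \<Sum>i<n. \<sigma> i * l i) ` (\<lambda>a i. P (Suc j) a i - P j a i) ` A)"
    for j \<sigma>
  have level: "rademacher_mean n (M j) \<le> 6 * sqrt n * (D / 2 ^ Suc j) * sqrt (ln (m (Suc j)))" for j
  proof -
    have "rademacher_mean n (M j) \<le> 2 * (sqrt n * (D / 2 ^ Suc j) + sqrt n * (D / 2 ^ j))
        * sqrt (ln (m (Suc j)))"
      unfolding M_def
    proof (rule massart_increments [where C = "C (Suc j)" and C' = "C j"])
      show "card (C j) \<le> m (Suc j)"
        using C(2) [of j] monoD [OF C(3), of j "Suc j"] by simp
      show "(\<Sum>i<n. (P (Suc j) a i - v a i)\<^sup>2) \<le> (sqrt n * (D / 2 ^ Suc j))\<^sup>2" if "a \<in> A" for a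
        using P_dist [OF that, of "Suc j"] by (simp only: power2_commute)
    qed (use assms(2,3) C P P_dist in auto)
    thus ?thesis
      by (simp add: field_simps)
  qed
  define e where "e = D / 2 ^ K"
  have chain: "(\<Sum>i<n. \<sigma> i * v a i) \<le> (\<Sum>i<n. \<sigma> i * t0 i) + (\<Sum>j<K. M j \<sigma>) + n * e"
    if "\<sigma> \<in> {..<n} \<rightarrow>\<^sub>E {-1, 1}" "a \<in> A" for \<sigma> a
  proof -
    have "P 0 a = t0"
      using P [OF \<open>a \<in> A\<close>, of 0] \<open>C 0 = {t0}\<close> by simp
    have "(\<Sum>i<n. \<sigma> i * (P (Suc j) a i - P j a i)) \<le> M j \<sigma>" for j
      unfolding M_def using finite_diff_image [of "C (Suc j)" "C j" A "P (Suc j)" "P j"] C(1) P \<open>a \<in> A\<close>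
      by (intro Max_ge) auto
    hence "(\<Sum>j<K. \<Sum>i<n. \<sigma> i * (P (Suc j) a i - P j a i)) \<le> (\<Sum>j<K. M j \<sigma>)"
      by (intro sum_mono)
    moreover have "(\<Sum>i<n. \<sigma> i * (v a i - P K a i)) \<le> n * e"
      using that P_dist [of a K] \<open>D > 0\<close> unfolding e_def
      by (intro sum_sign_mult_le) (auto simp: PiE_iff power_mult_distrib power_divide)
    ultimately show ?thesis
      using sum_sign_telescope [where n = n and \<sigma> = \<sigma> and v = "v a" and P = "\<lambda>j. P j a" and K = K]
      unfolding \<open>P 0 a = t0\<close> by linarith
  qed
  have "rademacher_mean n (\<lambda>\<sigma>. SUP a\<in>A. (\<Sum>i<n. \<sigma> i * v a i) / n)
      \<le> e + (\<Sum>j<K. 6 * sqrt n * (D / 2 ^ Suc j) * sqrt (ln (m (Suc j)))) / n"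
    using \<open>n > 0\<close> \<open>A \<noteq> {}\<close> chain level by (rule rademacher_mean_SUP_le_decomposition)
  also have "\<dots> = e + 6 * (sqrt n / n) * (\<Sum>j<K. D / 2 ^ Suc j * sqrt (ln (m (Suc j))))"
    by (simp add: sum_distrib_left sum_divide_distrib mult_ac)
  also have "sqrt n / n = 1 / sqrt n"
    using sqrt_divide_self_eq [of n] by (simp add: divide_inverse)
  finally show ?thesis
    by (simp add: e_def)
qed

lemma sum_le_of_emp_dist_le:
  fixes f g :: "'x \<Rightarrow> real" and \<rho> :: real
  assumes "emp_dist S f g \<le> \<rho>" "S \<noteq> []"
  shows "(\<Sum>i<length S. (f (fst (S ! i)) - g (fst (S ! i)))\<^sup>2) \<le> length S * \<rho>\<^sup>2"
proof -
  have "(\<Sum>i<length S. (f (fst (S ! i)) - g (fst (S ! i)))\<^sup>2) / length S \<le> \<rho>\<^sup>2"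
    using assms(1) unfolding emp_dist_def by (rule sqrt_le_D)
  thus ?thesis
    using assms(2) by (simp add: field_simps)
qed

lemma emp_dist_le_if_pointwise:
  fixes f g :: "'x \<Rightarrow> real" and \<rho> :: real
  assumes "\<rho> \<ge> 0" "\<And>i. i < length S \<Longrightarrow> \<bar>f (fst (S ! i)) - g (fst (S ! i))\<bar> \<le> \<rho>"
  shows "emp_dist S f g \<le> \<rho>"
proof -
  have "(\<Sum>i<length S. (f (fst (S ! i)) - g (fst (S ! i)))\<^sup>2) \<le> (\<Sum>i<length S. \<rho>\<^sup>2)"
    using assms by (intro sum_mono) (metis abs_le_square_iff abs_of_nonneg lessThan_iff)
  hence "(\<Sum>i<length S. (f (fst (S ! i)) - g (fst (S ! i)))\<^sup>2) / length S \<le> \<rho>\<^sup>2"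
    by (cases "S = []") (auto simp: field_simps)
  thus ?thesis
    unfolding emp_dist_def using assms(1) by (simp add: real_sqrt_le_iff real_le_lsqrt)
qed

lemma floor_grid_approx:
  fixes t :: real and m :: nat
  assumes "m > 0" "t \<in> {0..1}"
  shows "\<lfloor>m * t\<rfloor> \<in> {0..int m}" and "\<bar>t - \<lfloor>m * t\<rfloor> / m\<bar> \<le> 1 / m"
proof -
  have "0 \<le> m * t" "m * t \<le> m"
    using assms by (auto simp: mult_left_le)
  thus "\<lfloor>m * t\<rfloor> \<in> {0..int m}"
    by (auto simp: floor_le_iff)
  have "t - \<lfloor>m * t\<rfloor> / m = (m * t - \<lfloor>m * t\<rfloor>) / m"
    using assms(1) by (simp add: field_simps)
  moreover have "0 \<le> m * t - \<lfloor>m * t\<rfloor>" "m * t - \<lfloor>m * t\<rfloor> \<le> 1"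
    by linarith+
  ultimately show "\<bar>t - \<lfloor>m * t\<rfloor> / m\<bar> \<le> 1 / m"
    using assms(1) by (simp add: divide_right_mono)
qed

text \<open>Rounding down to the grid of mesh 1/m on the sample points gives a finite cover, so
  covering numbers of [0,1]-valued classes are attained minima rather than junk values of LEAST.\<close>
lemma finite_cover_exists:
  assumes "\<rho> > 0" "\<forall>f\<in>F. \<forall>x. f x \<in> {0..1}"
  shows "\<exists>C. finite C \<and> is_cover F \<rho> S C"
proof -
  obtain m :: nat where m: "1 / \<rho> < m"
    using reals_Archimedean2 by blast
  moreover have "1 / \<rho> > 0"
    using assms(1) by simp
  ultimately have "m > 0"
    by (metis of_nat_0_less_iff order.strict_trans)
  hence "1 / m \<le> \<rho>"
    using m assms(1) by (simp add: field_simps)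
  define X where "X = fst ` set S"
  define round where "round f = restrict (\<lambda>x. \<lfloor>m * f x\<rfloor> / m) X" for f :: "'a \<Rightarrow> real"
  have "round f \<in> X \<rightarrow>\<^sub>E (\<lambda>k. real_of_int k / m) ` {0..int m}" if "f \<in> F" for f
    unfolding round_def restrict_PiE_iff
    using floor_grid_approx(1) [OF \<open>m > 0\<close>] assms(2) that by blast
  hence "round ` F \<subseteq> X \<rightarrow>\<^sub>E (\<lambda>k. real_of_int k / m) ` {0..int m}"
    by blast
  hence "finite (round ` F)"
    by (rule finite_subset) (auto simp: X_def intro!: finite_PiE)
  moreover have "is_cover F \<rho> S (round ` F)"
    unfolding is_cover_def
  proof
    fix f assume "f \<in> F"
    have "emp_dist S f (round f) \<le> \<rho>"
    proof (rule emp_dist_le_if_pointwise)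
      fix i assume "i < length S"
      hence "round f (fst (S ! i)) = \<lfloor>m * f (fst (S ! i))\<rfloor> / m"
        by (simp add: round_def X_def)
      moreover have "\<bar>f (fst (S ! i)) - \<lfloor>m * f (fst (S ! i))\<rfloor> / m\<bar> \<le> 1 / m"
        using floor_grid_approx(2) [OF \<open>m > 0\<close>] assms(2) \<open>f \<in> F\<close> by blast
      ultimately show "\<bar>f (fst (S ! i)) - round f (fst (S ! i))\<bar> \<le> \<rho>"
        using \<open>1 / m \<le> \<rho>\<close> by linarith
    qed (use assms(1) in simp)
    thus "\<exists>c\<in>round ` F. emp_dist S f c \<le> \<rho>"
      using \<open>f \<in> F\<close> by blast
  qed
  ultimately show ?thesis by blast
qed

lemma covering_number_attained:
  assumes "\<rho> > 0" "\<forall>f\<in>F. \<forall>x. f x \<in> {0..1}"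
  shows "\<exists>C. finite C \<and> card C = covering_number F \<rho> S \<and> is_cover F \<rho> S C"
proof -
  obtain C where "finite C" "is_cover F \<rho> S C"
    using finite_cover_exists [OF assms] by blast
  hence "\<exists>k C. finite C \<and> card C = k \<and> is_cover F \<rho> S C"
    by blast
  thus ?thesis
    unfolding covering_number_def by (rule LeastI_ex)
qed

lemma covering_number_antimono:
  assumes "0 < \<rho>" "\<rho> \<le> \<rho>'" "\<forall>f\<in>F. \<forall>x. f x \<in> {0..1}"
  shows "covering_number F \<rho>' S \<le> covering_number F \<rho> S"
proof -
  obtain C where "finite C" "card C = covering_number F \<rho> S" "is_cover F \<rho> S C"
    using covering_number_attained [OF assms(1,3)] by blast
  moreover have "is_cover F \<rho>' S C"
    using \<open>is_cover F \<rho> S C\<close> assms(2) unfolding is_cover_def by (meson order_trans)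
  ultimately show ?thesis
    unfolding covering_number_def by (intro Least_le) blast
qed

lemma covering_number_pos:
  assumes "0 < \<rho>" "\<forall>f\<in>F. \<forall>x. f x \<in> {0..1}" "F \<noteq> {}"
  shows "covering_number F \<rho> S \<ge> 1"
proof -
  obtain C where "finite C" "card C = covering_number F \<rho> S" "is_cover F \<rho> S C"
    using covering_number_attained [OF assms(1,2)] by blast
  moreover have "C \<noteq> {}"
    using \<open>is_cover F \<rho> S C\<close> assms(3) unfolding is_cover_def by blast
  ultimately show ?thesis
    by (metis Suc_leI One_nat_def card_gt_0_iff)
qed

text \<open>Cover centres are arbitrary real functions; clipping them to [0,1] makes the square loss
  Lipschitz at them without moving them away from any [0,1]-valued function.\<close>
definition clip01 :: "real \<Rightarrow> real" where
  "clip01 t = max 0 (min 1 t)"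

lemma clip01_mem: "clip01 t \<in> {0..1}"
  by (simp add: clip01_def)

lemma clip01_id: "t \<in> {0..1} \<Longrightarrow> clip01 t = t"
  by (simp add: clip01_def)

lemma dist_clip01_le: "f \<in> {0..1} \<Longrightarrow> \<bar>f - clip01 g\<bar> \<le> \<bar>f - g\<bar>"
  by (auto simp: clip01_def)

lemma square_loss_diff_le:
  fixes f h y :: real
  assumes "f \<in> {0..1}" "h \<in> {0..1}" "y \<in> {0..1}"
  shows "((f - y)\<^sup>2 - (h - y)\<^sup>2)\<^sup>2 \<le> 4 * (f - h)\<^sup>2"
proof -
  have "\<bar>f + h - 2 * y\<bar> \<le> 2"
    using assms by auto
  hence "(f + h - 2 * y)\<^sup>2 \<le> 2\<^sup>2"
    by (metis abs_le_square_iff abs_numeral)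
  hence "(f - h)\<^sup>2 * (f + h - 2 * y)\<^sup>2 \<le> (f - h)\<^sup>2 * 4"
    by (intro mult_left_mono) auto
  moreover have "((f - y)\<^sup>2 - (h - y)\<^sup>2)\<^sup>2 = (f - h)\<^sup>2 * (f + h - 2 * y)\<^sup>2"
    by (simp add: power2_eq_square algebra_simps)
  ultimately show ?thesis by simp
qed

definition loss_vector :: "('x \<times> real) list \<Rightarrow> ('x \<Rightarrow> real) \<Rightarrow> nat \<Rightarrow> real" where
  "loss_vector S f i = (f (fst (S ! i)) - snd (S ! i))\<^sup>2"

lemma emp_rademacher_loss_class:
  "emp_rademacher (loss_class H) S
    = rademacher_mean (length S) (\<lambda>\<sigma>. SUP f\<in>H. (\<Sum>i<length S. \<sigma> i * loss_vector S f i) / length S)"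
  unfolding emp_rademacher_def rademacher_mean_def loss_class_def loss_vector_def
  by (simp add: image_image case_prod_unfold)

lemma loss_vector_dist_le:
  fixes f g :: "'x \<Rightarrow> real" and \<rho> :: real
  assumes "sample_in_Z n S" "n > 0" "\<forall>x. f x \<in> {0..1}" "emp_dist S f g \<le> \<rho>"
  shows "(\<Sum>i<n. (loss_vector S f i - loss_vector S (clip01 \<circ> g) i)\<^sup>2) \<le> n * (2 * \<rho>)\<^sup>2"
proof -
  have S: "length S = n" "\<And>i. i < n \<Longrightarrow> snd (S ! i) \<in> {0..1}"
    using assms(1) by (auto simp: sample_in_Z_def)
  have "(loss_vector S f i - loss_vector S (clip01 \<circ> g) i)\<^sup>2
      \<le> 4 * (f (fst (S ! i)) - g (fst (S ! i)))\<^sup>2" if "i < n" for i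
  proof -
    have "(loss_vector S f i - loss_vector S (clip01 \<circ> g) i)\<^sup>2
        \<le> 4 * (f (fst (S ! i)) - clip01 (g (fst (S ! i))))\<^sup>2"
      unfolding loss_vector_def comp_def using S(2) [OF that] assms(3) clip01_mem
      by (intro square_loss_diff_le) auto
    also have "\<dots> \<le> 4 * (f (fst (S ! i)) - g (fst (S ! i)))\<^sup>2"
      using dist_clip01_le [of "f (fst (S ! i))" "g (fst (S ! i))"] assms(3)
      by (simp add: abs_le_square_iff)
    finally show ?thesis .
  qed
  hence "(\<Sum>i<n. (loss_vector S f i - loss_vector S (clip01 \<circ> g) i)\<^sup>2)
      \<le> (\<Sum>i<n. 4 * (f (fst (S ! i)) - g (fst (S ! i)))\<^sup>2)"
    by (intro sum_mono) simp
  also have "\<dots> = 4 * (\<Sum>i<n. (f (fst (S ! i)) - g (fst (S ! i)))\<^sup>2)"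
    by (rule sum_distrib_left [symmetric])
  also have "\<dots> \<le> 4 * (n * \<rho>\<^sup>2)"
    using sum_le_of_emp_dist_le [OF assms(4)] S(1) assms(2) by auto
  finally show ?thesis
    by (simp add: power_mult_distrib)
qed

lemma mono_covering_number_dyadic:
  assumes "\<forall>f\<in>F. \<forall>x. f x \<in> {0..1}" "\<gamma> > 0"
  shows "mono (\<lambda>j. covering_number F (\<gamma> / 2 ^ j) S)"
proof (rule monoI)
  fix j k :: nat assume "j \<le> k"
  hence "\<gamma> / 2 ^ k \<le> \<gamma> / 2 ^ j"
    using \<open>\<gamma> > 0\<close> by (intro divide_left_mono power_increasing) auto
  thus "covering_number F (\<gamma> / 2 ^ j) S \<le> covering_number F (\<gamma> / 2 ^ k) S"
    using \<open>\<gamma> > 0\<close> by (intro covering_number_antimono assms(1)) auto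
qed

text \<open>Scale 0 is covered by the centre c itself, finer scales by the clipped centres of minimal
  covers of F.\<close>
lemma loss_vector_covers:
  fixes F :: "('x \<Rightarrow> real) set" and S :: "('x \<times> real) list" and c :: "'x \<Rightarrow> real" and \<gamma> :: real
  assumes "n > 0" and F: "\<forall>f\<in>F. \<forall>x. f x \<in> {0..1}" and S: "sample_in_Z n S"
    and "c \<in> F" "\<gamma> > 0"
  obtains C where "C 0 = {loss_vector S c}"
    and "\<And>j. finite (C j)" "\<And>j. card (C j) \<le> covering_number F (\<gamma> / 2 ^ j) S"
    and "\<And>j a. a \<in> {f\<in>F. emp_dist S f c \<le> \<gamma>} \<Longrightarrow>
      \<exists>l\<in>C j. (\<Sum>i<n. (loss_vector S a i - l i)\<^sup>2) \<le> n * (2 * \<gamma> / 2 ^ j)\<^sup>2"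
proof -
  define N where "N j = covering_number F (\<gamma> / 2 ^ j) S" for j
  have "\<forall>j. \<exists>C. finite C \<and> card C = N j \<and> is_cover F (\<gamma> / 2 ^ j) S C"
    unfolding N_def using covering_number_attained [OF _ F] \<open>\<gamma> > 0\<close> by simp
  then obtain Cov where Cov: "\<And>j. finite (Cov j)" "\<And>j. card (Cov j) = N j"
    "\<And>j. is_cover F (\<gamma> / 2 ^ j) S (Cov j)"
    by metis
  define C where "C j = (\<lambda>g. loss_vector S (clip01 \<circ> g)) ` (if j = 0 then {c} else Cov j)" for j
  have "loss_vector S (clip01 \<circ> c) = loss_vector S c"
    using F \<open>c \<in> F\<close> by (simp add: loss_vector_def clip01_id fun_eq_iff)
  hence "C 0 = {loss_vector S c}"
    by (simp add: C_def)
  moreover have "finite (C j)" for j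
    using Cov(1) by (simp add: C_def)
  moreover have "card (C j) \<le> N j" for j
    using card_image_le [OF Cov(1), of _ j] Cov(2) covering_number_pos [OF _ F] \<open>c \<in> F\<close> \<open>\<gamma> > 0\<close>
    by (auto simp: C_def N_def)
  moreover have "\<exists>l\<in>C j. (\<Sum>i<n. (loss_vector S a i - l i)\<^sup>2) \<le> n * (2 * \<gamma> / 2 ^ j)\<^sup>2"
    if "a \<in> {f\<in>F. emp_dist S f c \<le> \<gamma>}" for a j
  proof -
    have "a \<in> F" "emp_dist S a c \<le> \<gamma>"
      using that by auto
    have "\<exists>g\<in>(if j = 0 then {c} else Cov j). emp_dist S a g \<le> \<gamma> / 2 ^ j"
    proof (cases "j = 0")
      case False
      thus ?thesis
        using Cov(3) [of j] \<open>a \<in> F\<close> by (simp add: is_cover_def)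
    qed (use \<open>emp_dist S a c \<le> \<gamma>\<close> in simp)
    then obtain g where "g \<in> (if j = 0 then {c} else Cov j)" "emp_dist S a g \<le> \<gamma> / 2 ^ j"
      by blast
    moreover have "(\<Sum>i<n. (loss_vector S a i - loss_vector S (clip01 \<circ> g) i)\<^sup>2)
        \<le> n * (2 * (\<gamma> / 2 ^ j))\<^sup>2"
      using loss_vector_dist_le [OF S \<open>n > 0\<close> _ calculation(2)] F that by simp
    ultimately show ?thesis
      unfolding C_def by auto
  qed
  ultimately show ?thesis
    unfolding N_def by (rule that)
qed

lemma emp_rademacher_loss_class_le_dyadic_sum:
  fixes F :: "('x \<Rightarrow> real) set" and S :: "('x \<times> real) list" and c :: "'x \<Rightarrow> real"
    and \<gamma> :: real and K :: nat
  assumes "n > 0" "\<forall>f\<in>F. \<forall>x. f x \<in> {0..1}" "sample_in_Z n S" "c \<in> F" "\<gamma> > 0"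
  shows "emp_rademacher (loss_class {f\<in>F. emp_dist S f c \<le> \<gamma>}) S \<le> 2 * \<gamma> / 2 ^ K
    + 24 / sqrt n * (\<Sum>j<K. \<gamma> / 2 ^ Suc (Suc j) * sqrt (ln (covering_number F (\<gamma> / 2 ^ Suc j) S)))"
proof -
  obtain C where "C 0 = {loss_vector S c}" "\<And>j. finite (C j)"
    "\<And>j. card (C j) \<le> covering_number F (\<gamma> / 2 ^ j) S"
    "\<And>j a. a \<in> {f\<in>F. emp_dist S f c \<le> \<gamma>} \<Longrightarrow>
      \<exists>l\<in>C j. (\<Sum>i<n. (loss_vector S a i - l i)\<^sup>2) \<le> n * (2 * \<gamma> / 2 ^ j)\<^sup>2"
    using loss_vector_covers [OF assms] by blast
  hence "rademacher_mean n (\<lambda>\<sigma>. SUP a\<in>{f\<in>F. emp_dist S f c \<le> \<gamma>}. (\<Sum>i<n. \<sigma> i * loss_vector S a i) / n)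
      \<le> 2 * \<gamma> / 2 ^ K + 6 / sqrt n
        * (\<Sum>j<K. 2 * \<gamma> / 2 ^ Suc j * sqrt (ln (covering_number F (\<gamma> / 2 ^ Suc j) S)))"
    using assms mono_covering_number_dyadic [OF assms(2,5)]
    by (intro rademacher_chaining [where C = C]) (auto simp: emp_dist_def)
  also have "\<dots> = 2 * \<gamma> / 2 ^ K
      + 24 / sqrt n * (\<Sum>j<K. \<gamma> / 2 ^ Suc (Suc j) * sqrt (ln (covering_number F (\<gamma> / 2 ^ Suc j) S)))"
    by (simp add: sum_distrib_left mult_ac)
  finally show ?thesis
    using \<open>sample_in_Z n S\<close> by (simp add: emp_rademacher_loss_class sample_in_Z_def)
qed

lemma dyadic_sum_le_nn_integral:
  fixes g :: "real \<Rightarrow> real" and \<gamma> :: real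
  assumes "\<gamma> > 0"
    and antimono: "\<And>a b. 0 < a \<Longrightarrow> a \<le> b \<Longrightarrow> g b \<le> g a"
    and nonneg: "\<And>x. 0 < x \<Longrightarrow> 0 \<le> g x"
  shows "ennreal (\<Sum>j<K. \<gamma> / 2 ^ Suc (Suc j) * g (\<gamma> / 2 ^ Suc j))
    \<le> (\<integral>\<^sup>+ x. ennreal (g x) * indicator {0..\<gamma>} x \<partial>lborel)"
proof -
  define I where "I j = {\<gamma> / 2 ^ Suc (Suc j)<..\<gamma> / 2 ^ Suc j}" for j :: nat
  have "I j \<inter> I k = {}" if "j < k" for j k
  proof -
    have "\<gamma> / 2 ^ Suc k \<le> \<gamma> / 2 ^ Suc (Suc j)"
      using that \<open>\<gamma> > 0\<close> by (intro divide_left_mono power_increasing) auto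
    thus ?thesis by (auto simp: I_def)
  qed
  hence I_disjoint: "disjoint_family_on I {..<K}"
    unfolding disjoint_family_on_def by (metis inf_commute linorder_neqE_nat)
  have I_sub: "I j \<subseteq> {0..\<gamma>}" for j
  proof -
    have "\<gamma> / 2 ^ Suc j \<le> \<gamma> / 2 ^ 0"
      using \<open>\<gamma> > 0\<close> by (intro divide_left_mono power_increasing) auto
    moreover have "0 < \<gamma> / 2 ^ Suc (Suc j)"
      using \<open>\<gamma> > 0\<close> by simp
    ultimately show ?thesis
      unfolding I_def by auto
  qed
  have measure_I: "emeasure lborel (I j) = ennreal (\<gamma> / 2 ^ Suc (Suc j))" for j
    using \<open>\<gamma> > 0\<close> by (simp add: I_def field_simps)
  have "ennreal (\<Sum>j<K. \<gamma> / 2 ^ Suc (Suc j) * g (\<gamma> / 2 ^ Suc j))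
      = (\<Sum>j<K. ennreal (\<gamma> / 2 ^ Suc (Suc j) * g (\<gamma> / 2 ^ Suc j)))"
    using \<open>\<gamma> > 0\<close> nonneg by (intro sum_ennreal [symmetric]) simp
  also have "\<dots> = (\<Sum>j<K. ennreal (g (\<gamma> / 2 ^ Suc j)) * emeasure lborel (I j))"
    unfolding measure_I using \<open>\<gamma> > 0\<close>
    by (intro sum.cong refl, subst ennreal_mult') (simp_all add: mult.commute)
  also have "\<dots> = (\<integral>\<^sup>+ x. (\<Sum>j<K. ennreal (g (\<gamma> / 2 ^ Suc j)) * indicator (I j) x) \<partial>lborel)"
    by (subst nn_integral_sum) (auto simp: I_def nn_integral_cmult_indicator)
  also have "\<dots> \<le> (\<integral>\<^sup>+ x. ennreal (g x) * indicator {0..\<gamma>} x \<partial>lborel)"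
  proof (rule nn_integral_mono)
    fix x
    have "(\<Sum>j<K. ennreal (g (\<gamma> / 2 ^ Suc j)) * indicator (I j) x)
        \<le> (\<Sum>j<K. ennreal (g x) * indicator (I j) x)"
      by (intro sum_mono) (auto simp: I_def indicator_def intro!: ennreal_leI antimono)
    also have "\<dots> = ennreal (g x) * indicator (\<Union>j<K. I j) x"
      by (simp add: indicator_UN_disjoint [OF _ I_disjoint] sum_distrib_left)
    also have "\<dots> \<le> ennreal (g x) * indicator {0..\<gamma>} x"
      using I_sub by (intro mult_left_mono indicator_leI) (blast, simp)
    finally show "(\<Sum>j<K. ennreal (g (\<gamma> / 2 ^ Suc j)) * indicator (I j) x)
        \<le> ennreal (g x) * indicator {0..\<gamma>} x" .
  qed
  finally show ?thesis .
qed

lemma dyadic_entropy_sum_le_integral: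
  fixes F :: "('x \<Rightarrow> real) set" and S :: "('x \<times> real) list" and \<gamma> :: real
  assumes "\<forall>f\<in>F. \<forall>x. f x \<in> {0..1}" "F \<noteq> {}" "\<gamma> > 0"
  shows "ennreal (\<Sum>j<K. \<gamma> / 2 ^ Suc (Suc j) * sqrt (ln (covering_number F (\<gamma> / 2 ^ Suc j) S)))
    \<le> (\<integral>\<^sup>+ \<rho>. ennreal (sqrt (ln (covering_number F \<rho> S))) * indicator {0..\<gamma>} \<rho> \<partial>lborel)"
proof (rule dyadic_sum_le_nn_integral [OF \<open>\<gamma> > 0\<close>])
  fix a b :: real assume "0 < a" "a \<le> b"
  thus "sqrt (ln (covering_number F b S)) \<le> sqrt (ln (covering_number F a S))"
    using covering_number_antimono [OF \<open>0 < a\<close> \<open>a \<le> b\<close> assms(1), of S]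
      covering_number_pos [OF _ assms(1,2), of b S]
    by simp
next
  fix \<rho> :: real assume "0 < \<rho>"
  thus "0 \<le> sqrt (ln (covering_number F \<rho> S))"
    using covering_number_pos [OF _ assms(1,2), of \<rho> S] by simp
qed

lemma emp_rademacher_loss_class_le_entropy_integral:
  fixes F :: "('x \<Rightarrow> real) set" and S :: "('x \<times> real) list" and c :: "'x \<Rightarrow> real"
    and \<gamma> :: real
  assumes "n > 0" "\<forall>f\<in>F. \<forall>x. f x \<in> {0..1}" "sample_in_Z n S" "c \<in> F" "\<gamma> > 0"
  shows "ennreal (emp_rademacher (loss_class {f\<in>F. emp_dist S f c \<le> \<gamma>}) S)
    \<le> ennreal (24 / sqrt n) *
      (\<integral>\<^sup>+ \<rho>. ennreal (sqrt (ln (covering_number F \<rho> S))) * indicator {0..\<gamma>} \<rho> \<partial>lborel)"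
    (is "ennreal ?R \<le> ennreal ?c * ?I")
proof (rule ennreal_le_epsilon)
  fix e :: real assume "e > 0"
  define T where
    "T K = (\<Sum>j<K. \<gamma> / 2 ^ Suc (Suc j) * sqrt (ln (covering_number F (\<gamma> / 2 ^ Suc j) S)))" for K
  have "covering_number F \<rho> S \<ge> 1" if "\<rho> > 0" for \<rho>
    using that assms(2,4) by (intro covering_number_pos) auto
  hence T_nonneg: "T K \<ge> 0" for K
    unfolding T_def using \<open>\<gamma> > 0\<close> by (intro sum_nonneg mult_nonneg_nonneg) simp_all
  obtain K where "(1 / 2) ^ K < e / (2 * \<gamma>)"
    using real_arch_pow_inv [of "e / (2 * \<gamma>)" "1 / 2"] \<open>e > 0\<close> \<open>\<gamma> > 0\<close> by auto
  hence "2 * \<gamma> / 2 ^ K < e"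
    using \<open>\<gamma> > 0\<close> by (simp add: field_simps power_divide)
  moreover have "?R \<le> 2 * \<gamma> / 2 ^ K + ?c * T K"
    unfolding T_def using emp_rademacher_loss_class_le_dyadic_sum [OF assms] .
  ultimately have "ennreal ?R \<le> ennreal (?c * T K + e)"
    by (intro ennreal_leI) linarith
  also have "\<dots> = ennreal (?c * T K) + ennreal e"
    using \<open>e > 0\<close> T_nonneg [of K] by (intro ennreal_plus) auto
  also have "\<dots> = ennreal ?c * ennreal (T K) + ennreal e"
    by (simp only: ennreal_mult'' [OF T_nonneg])
  also have "\<dots> \<le> ennreal ?c * ?I + ennreal e"
    unfolding T_def using assms(2,4,5)
    by (intro add_right_mono mult_left_mono dyadic_entropy_sum_le_integral) auto
  finally show "ennreal ?R \<le> ennreal ?c * ?I + ennreal e" .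
qed

theorem lemma6:
  fixes F :: "('x \<Rightarrow> real) set" and n :: nat and rs \<gamma> :: real
    and S' :: "('x \<times> real) list" and c :: "'x \<Rightarrow> real"
  assumes "n > 0"
    and "\<forall>f\<in>F. \<forall>x. f x \<in> {0..1}"
    and "loc_radius n {(\<lambda>z. (f (fst z) - g (fst z))\<^sup>2) | f g. f \<in> F \<and> g \<in> F} rs"
    and "sample_in_Z n S'"
    and "c \<in> F"
    and "\<gamma> > 0" and "\<gamma> \<ge> sqrt rs"
  shows "ennreal (emp_rademacher (loss_class {f\<in>F. emp_dist S' f c \<le> \<gamma>}) S')
     \<le> ennreal (\<gamma> * sqrt rs) + ennreal (24 / sqrt n) *
        (\<integral>\<^sup>+ \<rho>. ennreal (sqrt (ln (covering_number F \<rho> S'))) * indicator {0..\<gamma>} \<rho> \<partial>lborel)"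
  using emp_rademacher_loss_class_le_entropy_integral [OF assms(1,2,4,5,6)]
  by (rule add_increasing [OF zero_le])

end
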